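(* Let $t,t'\in B_n$ with $t\neq t'$, let $G$ be a digraph such that $\mathbb{A}(G)$ satisfies $t\approx t'$, and write $L=L_{t,t'}$, $\omega=\omega_{t,t'}$. If $v_0\to v_1\to\dots\to v_{L+1}$ is a walk in $G$ such that $v_{L+1}$ belongs to a nontrivial strongly connected component, $r\in\{1,\dots,L+1\}$, and $v_{r-1}\to v'_r\to v'_{r+1}\to\dots\to v'_{\omega(r)}$ is a walk in $G$, then $v'_{L+1}$ belongs to a nontrivial strongly connected component. Consequently, $\omega_G(L+1,r)<\omega(r)$ for all $r\in\{1,\dots,L+1\}$.
   Context: Digraphs $G=(V,E)$ have $E\subseteq V\times V$, loops allowed, possibly infinite. $\mathbb{A}(G)$ is the groupoid on $V\cup\{\infty\}$ with $xy=x$ if $x,y\in V$, $(x,y)\in E$, and $xy=\infty$ otherwise. $B_n$: binary terms with $x_1,\dots,x_n$ each occurring once in this order; $G(t)$: rooted tree defined by $G(x_i)$ a single vertex and $G(t_1t_2)=G(t_1)\cup G(t_2)$ plus an edge from the leftmost variable of $t_1$ to that of $t_2$; root $x_1$. $d_T$ is depth, $h$ height, $T_x$ the rooted induced subtree of $x$ and its descendants. With $T=G(t)$, $T'=G(t')$: $L_{t,t'}$ is the largest $m$ such that for all $x$, $d_T(x)\le m$ or $d_{T'}(x)\le m$ implies $d_T(x)=d_{T'}(x)$. Let $\Delta=\{x:T_x\ne T'_x\}$, $\Omega=\{(d_T(x),h(T_x)),(d_{T'}(x),h(T'_x)):x\in\Delta\}$, $\xi=\min\{d+h:(d,h)\in\Omega\}$;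 for integers $r\ge0$, $\omega_{t,t'}(r)=\min\{d+h:(d,h)\in\Omega,\ d\le r\}$ if $r<\xi$ and $\omega_{t,t'}(r)=\xi$ if $r\ge\xi$ (one has $\omega_{t,t'}(r)>L_{t,t'}$). A strongly connected component (SCC) is trivial if it is a single vertex without a loop, nontrivial otherwise. For $\ell\ge r\ge1$, $\omega_G(\ell,r)$ is the largest integer $m$ such that there exist a walk $v_0\to\dots\to v_\ell$ with $v_\ell$ in a nontrivial SCC and a walk $v_{r-1}\to v'_r\to\dots\to v'_m$ with $v'_\ell$ in a trivial SCC ($\infty$ if unbounded, $-\infty$ if none). *)

theory Defs
  imports "HOL-Library.Extended_Real"
begin

text \<open>A digraph is given by its edge relation E on the vertex type 'v (vertex set = UNIV).
  The groupoid A(G) has carrier 'v option, where None plays the role of infinity.\<close>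

definition gmult :: "('v \<times> 'v) set \<Rightarrow> 'v option \<Rightarrow> 'v option \<Rightarrow> 'v option" where
  "gmult E a b = (case (a, b) of
      (Some x, Some y) \<Rightarrow> (if (x, y) \<in> E then Some x else None)
    | _ \<Rightarrow> None)"

datatype bterm = Var nat | App bterm bterm

fun leaves :: "bterm \<Rightarrow> nat list" where
  "leaves (Var i) = [i]"
| "leaves (App t1 t2) = leaves t1 @ leaves t2"

definition B :: "nat \<Rightarrow> bterm set" where
  "B n = {t. leaves t = [1..<n+1]}"

fun eval :: "('v \<times> 'v) set \<Rightarrow> (nat \<Rightarrow> 'v option) \<Rightarrow> bterm \<Rightarrow> 'v option" where
  "eval E \<sigma> (Var i) = \<sigma> i"
| "eval E \<sigma> (App t1 t2) = gmult E (eval E \<sigma> t1) (eval E \<sigma> t2)"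

definition satisfies :: "('v \<times> 'v) set \<Rightarrow> bterm \<Rightarrow> bterm \<Rightarrow> bool" where
  "satisfies E t t' \<longleftrightarrow> (\<forall>\<sigma>. eval E \<sigma> t = eval E \<sigma> t')"

fun lm :: "bterm \<Rightarrow> nat" where
  "lm (Var i) = i"
| "lm (App t1 t2) = lm t1"

fun tree_edges :: "bterm \<Rightarrow> (nat \<times> nat) set" where
  "tree_edges (Var i) = {}"
| "tree_edges (App t1 t2) = tree_edges t1 \<union> tree_edges t2 \<union> {(lm t1, lm t2)}"

text \<open>Depth d_T(x): distance from the root (= leftmost variable) of G(t).\<close>
definition depth :: "bterm \<Rightarrow> nat \<Rightarrow> nat" where
  "depth t x = (LEAST k. (lm t, x) \<in> (tree_edges t) ^^ k)"

definition desc :: "(nat \<times> nat) set \<Rightarrow> nat \<Rightarrow> nat set" where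
  "desc E x = {y. (x, y) \<in> E\<^sup>*}"

definition subtree :: "(nat \<times> nat) set \<Rightarrow> nat \<Rightarrow> nat set \<times> (nat \<times> nat) set" where
  "subtree E x = (desc E x, E \<inter> (desc E x \<times> desc E x))"

definition height_sub :: "(nat \<times> nat) set \<Rightarrow> nat \<Rightarrow> nat" where
  "height_sub E x = Max {k. \<exists>y. (x, y) \<in> (snd (subtree E x)) ^^ k}"

definition Lpar :: "bterm \<Rightarrow> bterm \<Rightarrow> nat" where
  "Lpar t t' = (GREATEST m. \<forall>x \<in> set (leaves t).
      (depth t x \<le> m \<or> depth t' x \<le> m) \<longrightarrow> depth t x = depth t' x)"

definition Delta :: "bterm \<Rightarrow> bterm \<Rightarrow> nat set" where
  "Delta t t' = {x \<in> set (leaves t). subtree (tree_edges t) x \<noteq> subtree (tree_edges t') x}"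

definition Omega :: "bterm \<Rightarrow> bterm \<Rightarrow> (nat \<times> nat) set" where
  "Omega t t' = (\<Union>x \<in> Delta t t'.
      {(depth t x, height_sub (tree_edges t) x), (depth t' x, height_sub (tree_edges t') x)})"

definition xi :: "bterm \<Rightarrow> bterm \<Rightarrow> nat" where
  "xi t t' = Min {d + h | d h. (d, h) \<in> Omega t t'}"

definition omega :: "bterm \<Rightarrow> bterm \<Rightarrow> nat \<Rightarrow> nat" where
  "omega t t' r = (if r < xi t t' then Min {d + h | d h. (d, h) \<in> Omega t t' \<and> d \<le> r}
                   else xi t t')"

definition scc :: "('v \<times> 'v) set \<Rightarrow> 'v \<Rightarrow> 'v set" where
  "scc E u = {w. (u, w) \<in> E\<^sup>* \<and> (w, u) \<in> E\<^sup>*}"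

definition nontrivial_scc :: "('v \<times> 'v) set \<Rightarrow> 'v \<Rightarrow> bool" where
  "nontrivial_scc E u \<longleftrightarrow> \<not> (scc E u = {u} \<and> (u, u) \<notin> E)"

definition walk :: "('v \<times> 'v) set \<Rightarrow> (nat \<Rightarrow> 'v) \<Rightarrow> nat \<Rightarrow> nat \<Rightarrow> bool" where
  "walk E w a b \<longleftrightarrow> (\<forall>i. a \<le> i \<and> i < b \<longrightarrow> (w i, w (Suc i)) \<in> E)"

definition omegaG_set :: "('v \<times> 'v) set \<Rightarrow> nat \<Rightarrow> nat \<Rightarrow> nat set" where
  "omegaG_set E l r = {m. l \<le> m \<and> (\<exists>v w. walk E v 0 l \<and> nontrivial_scc E (v l)
       \<and> w (r - 1) = v (r - 1) \<and> walk E w (r - 1) m \<and> \<not> nontrivial_scc E (w l))}"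

text \<open>omega_G(l,r) in the extended reals: Sup {} = -infinity, unbounded gives infinity.\<close>
definition omegaG :: "('v \<times> 'v) set \<Rightarrow> nat \<Rightarrow> nat \<Rightarrow> ereal" where
  "omegaG E l r = Sup ((\<lambda>m. ereal (real m)) ` omegaG_set E l r)"

end

theory Submission
  imports Defs
begin

text \<open>Under an assignment of vertices, a term t evaluates in A(G) to the image of the root of
  G(t) if the assignment is a homomorphism of G(t) into G, and to infinity otherwise; so A(G)
  satisfies t = t' iff G(t) and G(t') have the same homomorphisms into G. For terms in B_n both
  trees have vertices 1..n and root 1, and a term is determined by its depth function.

  The depths in the two trees agree up to L, and some vertex has depth L + 1 in one tree and a
  larger depth in the other. Sending every vertex to the position of its depth on a long walk is a
  homomorphism of one tree, hence of the other, and the edge of the other tree into that vertex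
  closes a cycle through position L + 1 of the walk. It therefore suffices to show that the walk
  w has arbitrarily long continuations from position L + 1.

  If it has not, let x in Delta realize omega(r). Mapping the subtree of x along w and every other
  vertex along an infinite walk that follows v and then circles in the nontrivial SCC of v(L + 1)
  gives a homomorphism of one tree. In the other tree it has to map every edge below x to an edge
  that descends in the first tree, with at least the same increase of depth. Arguing in both
  directions (when x has depth L + 1, the second time with w shifted) shows that the two subtrees
  rooted at x coincide, which contradicts x in Delta.\<close>

section \<open>Walks and strongly connected components\<close>

definition infinite_walk :: "('v \<times> 'v) set \<Rightarrow> (nat \<Rightarrow> 'v) \<Rightarrow> bool" where
  "infinite_walk E f \<longleftrightarrow> (\<forall>k. (f k, f (Suc k)) \<in> E)"

definition has_long_walks :: "('v \<times> 'v) set \<Rightarrow> 'v \<Rightarrow> bool" where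
  "has_long_walks E z \<longleftrightarrow> (\<forall>N. \<exists>g. g 0 = z \<and> walk E g 0 N)"

lemma relpow_Int_subset: "(R \<inter> S) ^^ k \<subseteq> (R :: ('a \<times> 'a) set) ^^ k"
  by (induction k) (auto intro!: relcomp_mono)

lemma walk_mono: "walk E f i j \<Longrightarrow> i \<le> i' \<Longrightarrow> j' \<le> j \<Longrightarrow> walk E f i' j'"
  unfolding walk_def by auto

lemma walk_rtrancl:
  assumes "walk E f i j" "i \<le> k" "k \<le> l" "l \<le> j"
  shows "(f k, f l) \<in> E\<^sup>*"
  using assms(3)
proof (induction l rule: dec_induct)
  case base
  then show ?case by simp
next
  case (step l)
  then have "(f l, f (Suc l)) \<in> E" using assms unfolding walk_def by simp
  with step.IH show ?case by (rule rtrancl_into_rtrancl)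
qed

lemma walk_append:
  assumes "walk E f a b" "walk E g b c" "f b = g b"
  shows "walk E (\<lambda>k. if k \<le> b then f k else g k) a c"
  unfolding walk_def
proof (intro allI impI)
  fix i assume i: "a \<le> i \<and> i < c"
  consider "Suc i \<le> b" | "i = b" | "b < i" by linarith
  then show "((if i \<le> b then f i else g i), (if Suc i \<le> b then f (Suc i) else g (Suc i))) \<in> E"
    by cases (use i assms in \<open>auto simp: walk_def\<close>)
qed

lemma walk_shift: "walk E g 0 N \<Longrightarrow> walk E (\<lambda>k. g (k - a)) a (a + N)"
  unfolding walk_def by (auto simp: Suc_diff_le)

lemma walk_after_edge:
  assumes w: "walk E w a b" and e: "(f (d - 1), w a) \<in> E" and d: "0 < d"
  shows "walk E (\<lambda>k. if k < d then f k else w (k + a - d)) (d - 1) (b + d - a)"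
  unfolding walk_def
proof (intro allI impI)
  fix k assume k: "d - 1 \<le> k \<and> k < b + d - a"
  show "((if k < d then f k else w (k + a - d)),
      (if Suc k < d then f (Suc k) else w (Suc k + a - d))) \<in> E"
  proof (cases "k < d")
    case True
    then have "k = d - 1" using k by linarith
    then show ?thesis using e d by simp
  next
    case False
    then have "Suc k + a - d = Suc (k + a - d)" "a \<le> k + a - d" "k + a - d < b" using k by auto
    then show ?thesis using w False unfolding walk_def by simp
  qed
qed

lemma infinite_walk_has_long_walks: "infinite_walk E f \<Longrightarrow> has_long_walks E (f k)"
  unfolding has_long_walks_def infinite_walk_def walk_def
  by (intro allI exI[of _ "\<lambda>i. f (k + i)"]) simp

lemma has_long_walks_edge:
  assumes "(a, b) \<in> E" "has_long_walks E b"
  shows "has_long_walks E a"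
  unfolding has_long_walks_def
proof
  fix N
  obtain g where "g 0 = b" "walk E g 0 N" using assms(2) unfolding has_long_walks_def by blast
  define h where "h i = (case i of 0 \<Rightarrow> a | Suc i \<Rightarrow> g i)" for i
  have "walk E h 0 N" using assms(1) \<open>g 0 = b\<close> \<open>walk E g 0 N\<close>
    unfolding walk_def h_def by (auto split: nat.split)
  then show "\<exists>g. g 0 = a \<and> walk E g 0 N" by (intro exI[of _ h]) (simp add: h_def)
qed

lemma has_long_walks_walk:
  assumes "walk E w i j" "i \<le> k" "k \<le> j" "has_long_walks E (w k)"
  shows "has_long_walks E (w i)"
  using assms(2)
proof (induction i rule: inc_induct)
  case base
  then show ?case by (rule assms(4))
next
  case (step i)
  then have "(w i, w (Suc i)) \<in> E" using assms(1,3) unfolding walk_def by simp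
  then show ?case using step.IH by (rule has_long_walks_edge)
qed

lemma nontrivial_scc_iff: "nontrivial_scc E u \<longleftrightarrow> (u, u) \<in> E\<^sup>+"
proof
  assume "nontrivial_scc E u"
  then consider "(u, u) \<in> E" | u' where "u' \<noteq> u" "(u, u') \<in> E\<^sup>*" "(u', u) \<in> E\<^sup>*"
    unfolding nontrivial_scc_def scc_def by auto
  then show "(u, u) \<in> E\<^sup>+"
  proof cases
    case 2
    then have "(u, u') \<in> E\<^sup>+" by (auto dest: rtranclD)
    with 2(3) show ?thesis by simp
  qed simp
next
  assume "(u, u) \<in> E\<^sup>+"
  then obtain b where b: "(u, b) \<in> E" "(b, u) \<in> E\<^sup>*"
    by (meson converse_tranclE trancl_into_rtrancl)
  show "nontrivial_scc E u"
  proof (cases "b = u")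
    case True
    with b show ?thesis unfolding nontrivial_scc_def by simp
  next
    case False
    have "b \<in> scc E u" using b unfolding scc_def by auto
    with False show ?thesis unfolding nontrivial_scc_def by auto
  qed
qed

lemma nontrivial_scc_closed_walk:
  assumes "walk E f i j" "(f j, f i) \<in> E" "i \<le> m" "m \<le> j"
  shows "nontrivial_scc E (f m)"
proof -
  have "(f m, f j) \<in> E\<^sup>*" "(f i, f m) \<in> E\<^sup>*"
    using walk_rtrancl[OF assms(1)] assms(3,4) by auto
  with assms(2) have "(f m, f m) \<in> E\<^sup>+" by (meson rtrancl_into_trancl1 trancl_rtrancl_trancl)
  then show ?thesis by (simp add: nontrivial_scc_iff)
qed

text \<open>A closed walk through a vertex of a nontrivial SCC, traversed periodically and started at
  the right phase, puts that vertex at any prescribed position of an infinite walk.\<close>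
lemma nontrivial_scc_infinite_walk:
  assumes "nontrivial_scc E z"
  obtains Q where "infinite_walk E Q" "Q a = z" "\<And>k. nontrivial_scc E (Q k)"
proof -
  have zz: "(z, z) \<in> E\<^sup>+" using assms by (simp add: nontrivial_scc_iff)
  then obtain c where "0 < c" "(z, z) \<in> E ^^ c" by (meson trancl_power)
  then obtain f where f: "f 0 = z" "f c = z" "\<And>i. i < c \<Longrightarrow> (f i, f (Suc i)) \<in> E"
    and c: "0 < c" by (auto simp: relpow_fun_conv)
  define Q where "Q k = f ((k + c * a - a) mod c)" for k
  have a: "a \<le> c * a" using c by simp
  have step: "Q k = f s \<and> Q (Suc k) = f (Suc s) \<and> (f s, f (Suc s)) \<in> E"
    if "s = (k + c * a - a) mod c" for k s
  proof -
    have "Suc k + c * a - a = Suc (k + c * a - a)" using a by arith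
    then have "Q (Suc k) = f (if Suc s = c then 0 else Suc s)" by (simp add: Q_def that mod_Suc)
    moreover have "f (if Suc s = c then 0 else Suc s) = f (Suc s)" using f(1,2) by simp
    moreover have "s < c" using c that by simp
    ultimately show ?thesis using f(3) by (simp add: Q_def that)
  qed
  have "infinite_walk E Q" unfolding infinite_walk_def using step by metis
  moreover have "Q a = z" unfolding Q_def using a f(1) by simp
  moreover have "nontrivial_scc E (Q k)" for k
  proof -
    let ?s = "(k + c * a - a) mod c"
    have w: "walk E f 0 c" using f(3) unfolding walk_def by simp
    have "?s < c" using c by simp
    then have "(f ?s, z) \<in> E\<^sup>*" "(z, f ?s) \<in> E\<^sup>*"
      using walk_rtrancl[OF w, of ?s c] walk_rtrancl[OF w, of 0 ?s] f(1,2) by auto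
    then have "(f ?s, f ?s) \<in> E\<^sup>+"
      using rtrancl_trancl_trancl[OF _ zz] trancl_rtrancl_trancl by metis
    then show ?thesis unfolding Q_def by (simp add: nontrivial_scc_iff)
  qed
  ultimately show ?thesis using that by blast
qed

lemma nontrivial_scc_has_long_walks: "nontrivial_scc E z \<Longrightarrow> has_long_walks E z"
  by (metis nontrivial_scc_infinite_walk infinite_walk_has_long_walks)

lemma infinite_walk_extension:
  assumes v: "walk E v 0 m" "nontrivial_scc E (v m)"
  obtains u where "infinite_walk E u" "\<And>k. k \<le> m \<Longrightarrow> u k = v k"
    "\<And>b. m \<le> b \<Longrightarrow> nontrivial_scc E (u b)"
proof -
  obtain P where P: "infinite_walk E P" "P 0 = v m" "\<And>k. nontrivial_scc E (P k)"
    using nontrivial_scc_infinite_walk[OF v(2)] by metis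
  define u where "u k = (if k \<le> m then v k else P (k - m))" for k
  have shift: "u k = P (k - m)" if "m \<le> k" for k
    using that P(2) by (auto simp: u_def)
  have "infinite_walk E u"
    unfolding infinite_walk_def
  proof
    fix k
    show "(u k, u (Suc k)) \<in> E"
    proof (cases "k < m")
      case True
      then show ?thesis using v(1) by (simp add: u_def walk_def)
    next
      case False
      then have "Suc k - m = Suc (k - m)" by arith
      then show ?thesis using P(1) shift[of k] shift[of "Suc k"] False
        by (simp add: infinite_walk_def)
    qed
  qed
  moreover have "nontrivial_scc E (u b)" if "m \<le> b" for b using shift[OF that] P(3) by simp
  ultimately show ?thesis using that by (simp add: u_def)
qed

section \<open>Terms with consecutive variables and their trees\<close>

definition consecutive :: "bterm \<Rightarrow> bool" where
  "consecutive t \<longleftrightarrow> leaves t = [lm t..<lm t + length (leaves t)]"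

lemma leaves_not_Nil: "leaves t \<noteq> []"
  by (induction t) auto

lemma hd_leaves: "hd (leaves t) = lm t"
  by (induction t) (auto simp: leaves_not_Nil)

lemma lm_in_leaves: "lm t \<in> set (leaves t)"
  by (metis hd_in_set hd_leaves leaves_not_Nil)

lemma set_leaves_consecutive:
  "consecutive t \<Longrightarrow> set (leaves t) = {lm t..<lm t + length (leaves t)}"
  unfolding consecutive_def by (metis set_upt)

lemma consecutive_AppD:
  assumes "consecutive (App t1 t2)"
  shows "consecutive t1" "consecutive t2" "lm t2 = lm t1 + length (leaves t1)"
proof -
  let ?a = "lm t1" and ?l1 = "length (leaves t1)" and ?l2 = "length (leaves t2)"
  have "leaves t1 @ leaves t2 = [?a..<?a + ?l1 + ?l2]"
    using assms by (simp add: consecutive_def add.assoc)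
  also have "\<dots> = [?a..<?a + ?l1] @ [?a + ?l1..<?a + ?l1 + ?l2]"
    by (rule upt_add_eq_append) simp
  finally have l1: "leaves t1 = [?a..<?a + ?l1]" and l2: "leaves t2 = [?a + ?l1..<?a + ?l1 + ?l2]"
    by (simp_all add: append_eq_append_conv)
  show "consecutive t1" using l1 by (simp add: consecutive_def)
  have "0 < ?l2" using leaves_not_Nil[of t2] by simp
  then have "hd [?a + ?l1..<?a + ?l1 + ?l2] = ?a + ?l1" by (intro hd_upt) simp
  then show lm2: "lm t2 = lm t1 + length (leaves t1)" using l2 hd_leaves[of t2] by simp
  show "consecutive t2" using l2 lm2 by (simp add: consecutive_def)
qed

lemma set_leaves_App:
  assumes "consecutive (App t1 t2)"
  shows "set (leaves t1) = {lm t1..<lm t2}" "set (leaves t2) = {lm t2..<lm t2 + length (leaves t2)}"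
  using set_leaves_consecutive[OF consecutive_AppD(1)[OF assms]]
    set_leaves_consecutive[OF consecutive_AppD(2)[OF assms]] consecutive_AppD(3)[OF assms]
  by auto

lemma B_consecutive:
  assumes "t \<in> B n"
  shows "consecutive t" "lm t = 1" "set (leaves t) = {1..n}"
proof -
  have l: "leaves t = [1..<n+1]" using assms by (simp add: B_def)
  then have "1 \<le> n" using leaves_not_Nil[of t] by (cases n) auto
  then have "hd [1..<n+1] = 1" by (intro hd_upt) simp
  then show lm: "lm t = 1" using l hd_leaves[of t] by simp
  show "consecutive t" using l lm by (simp add: consecutive_def)
  show "set (leaves t) = {1..n}" using l by auto
qed

fun parent :: "bterm \<Rightarrow> nat \<Rightarrow> nat" where
  "parent (Var i) y = i"
| "parent (App t1 t2) y = (if y \<in> set (leaves t1) then parent t1 y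
      else if y = lm t2 then lm t1 else parent t2 y)"

fun tdepth :: "bterm \<Rightarrow> nat \<Rightarrow> nat" where
  "tdepth (Var i) y = 0"
| "tdepth (App t1 t2) y = (if y \<in> set (leaves t1) then tdepth t1 y else Suc (tdepth t2 y))"

lemma tdepth_lm: "tdepth t (lm t) = 0"
  by (induction t) (auto simp: lm_in_leaves)

lemma tree_edges_parent:
  "consecutive t \<Longrightarrow>
    (a, b) \<in> tree_edges t \<longleftrightarrow> b \<in> set (leaves t) \<and> b \<noteq> lm t \<and> a = parent t b"
proof (induction t arbitrary: a b)
  case (Var i)
  then show ?case by simp
next
  case (App t1 t2)
  note IH1 = App.IH(1)[OF consecutive_AppD(1)[OF App.prems]]
  note IH2 = App.IH(2)[OF consecutive_AppD(2)[OF App.prems]]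
  note S = set_leaves_App[OF App.prems]
  have roots: "lm t1 \<in> set (leaves t1)" "lm t2 \<in> set (leaves t2)" "lm t2 \<notin> set (leaves t1)"
    using lm_in_leaves[of t1] lm_in_leaves[of t2] S by auto
  consider "b \<in> set (leaves t1)" | "b = lm t2" | "b \<in> set (leaves t2)" "b \<noteq> lm t2"
    | "b \<notin> set (leaves t1)" "b \<notin> set (leaves t2)"
    by blast
  then show ?case
  proof cases
    case 1
    then have "b \<notin> set (leaves t2)" using S by auto
    then show ?thesis using 1 IH1[of a b] IH2[of a b] roots by auto
  next
    case 2
    then show ?thesis using IH1[of a b] IH2[of a b] roots by auto
  next
    case 3
    then have "b \<notin> set (leaves t1)" using S by auto
    then show ?thesis using 3 IH1[of a b] IH2[of a b] roots by auto
  next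
    case 4
    then show ?thesis using IH1[of a b] IH2[of a b] roots by auto
  qed
qed

lemma tdepth_parent:
  assumes "consecutive t" "y \<in> set (leaves t)" "y \<noteq> lm t"
  shows "parent t y \<in> set (leaves t) \<and> parent t y < y \<and> tdepth t y = Suc (tdepth t (parent t y))"
  using assms
proof (induction t)
  case (Var i)
  then show ?case by simp
next
  case (App t1 t2)
  note IH1 = App.IH(1)[OF consecutive_AppD(1)[OF App.prems(1)]]
  note IH2 = App.IH(2)[OF consecutive_AppD(2)[OF App.prems(1)]]
  note S = set_leaves_App[OF App.prems(1)]
  consider "y \<in> set (leaves t1)" | "y = lm t2" | "y \<in> set (leaves t2)" "y \<noteq> lm t2"
    using App.prems(2) by auto
  then show ?case
  proof cases
    case 1
    then show ?thesis using IH1 App.prems(3) by auto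
  next
    case 2
    then show ?thesis using S lm_in_leaves[of t1] tdepth_lm[of t1] tdepth_lm[of t2] by auto
  next
    case 3
    then show ?thesis using IH2 S by auto
  qed
qed

text \<open>The vertices strictly between y and its parent lie in the subtrees of the earlier children
  of the parent.\<close>
lemma tdepth_between:
  assumes "consecutive t" "y \<in> set (leaves t)" "y \<noteq> lm t" "parent t y < j" "j < y"
  shows "tdepth t y \<le> tdepth t j"
  using assms
proof (induction t)
  case (Var i)
  then show ?case by simp
next
  case (App t1 t2)
  have c1: "consecutive t1" and c2: "consecutive t2"
    using consecutive_AppD[OF App.prems(1)] by auto
  note S = set_leaves_App[OF App.prems(1)]
  consider "y \<in> set (leaves t1)" | "y = lm t2" | "y \<in> set (leaves t2)" "y \<noteq> lm t2"
    using App.prems(2) by auto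
  then show ?case
  proof cases
    case 1
    then have "j \<in> set (leaves t1)"
      using tdepth_parent[OF c1 1] App.prems S by auto
    then show ?thesis using 1 App.IH(1)[OF c1] App.prems by auto
  next
    case 2
    then have "j \<in> set (leaves t1)" "j \<noteq> lm t1"
      using App.prems S by auto
    then show ?thesis using 2 S tdepth_parent[OF c1, of j] tdepth_lm[of t2] by auto
  next
    case 3
    then have "j \<in> set (leaves t2)"
      using tdepth_parent[OF c2 3] App.prems S by auto
    then have "j \<notin> set (leaves t1)" using S by auto
    then show ?thesis using 3 App.IH(2)[OF c2] App.prems \<open>j \<in> set (leaves t2)\<close> S by auto
  qed
qed

lemma tdepth_App_right_root:
  assumes "consecutive (App t1 t2)"
  shows "tdepth (App t1 t2) (lm t2) = 1"
    and "y \<in> set (leaves (App t1 t2)) \<Longrightarrow> tdepth (App t1 t2) y = 1 \<Longrightarrow> y \<le> lm t2"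
proof -
  note S = set_leaves_App[OF assms]
  show "tdepth (App t1 t2) (lm t2) = 1" using S tdepth_lm[of t2] by simp
  assume y: "y \<in> set (leaves (App t1 t2))" "tdepth (App t1 t2) y = 1"
  show "y \<le> lm t2"
  proof (cases "y \<in> set (leaves t1)")
    case True
    then show ?thesis using S by simp
  next
    case False
    then have "y \<in> set (leaves t2)" "tdepth t2 y = 0" using y by auto
    then show ?thesis using tdepth_parent[OF consecutive_AppD(2)[OF assms], of y] by fastforce
  qed
qed

lemma consecutive_tdepth_inj:
  assumes "consecutive t" "consecutive t'" "leaves t = leaves t'"
    and "\<forall>y \<in> set (leaves t). tdepth t y = tdepth t' y"
  shows "t = t'"
  using assms
proof (induction t arbitrary: t')
  case (Var i)
  then show ?case
    by (cases t') (use leaves_not_Nil in \<open>auto simp: Cons_eq_append_conv\<close>)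
next
  case (App t1 t2)
  obtain t1' t2' where t': "t' = App t1' t2'"
    using App.prems(3) leaves_not_Nil[of t1] leaves_not_Nil[of t2]
    by (cases t') (auto simp: append_eq_Cons_conv)
  note c = consecutive_AppD[OF App.prems(1)]
  note c' = consecutive_AppD[OF App.prems(2)[unfolded t']]
  have lm1: "lm t1' = lm t1"
    using hd_leaves[of "App t1 t2"] hd_leaves[of t'] App.prems(3) t' by simp
  have "lm t2' \<le> lm t2" "lm t2 \<le> lm t2'"
    using tdepth_App_right_root[OF App.prems(1)] tdepth_App_right_root[OF App.prems(2)[unfolded t']]
      App.prems(3,4) t' lm_in_leaves[of t2] lm_in_leaves[of t2']
    by (metis UnCI set_append leaves.simps(2))+
  then have "length (leaves t1') = length (leaves t1)" using c(3) c'(3) lm1 by simp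
  then have l1: "leaves t1' = leaves t1"
    using c(1) c'(1) lm1 unfolding consecutive_def by metis
  then have l2: "leaves t2' = leaves t2" using App.prems(3) t' by simp
  have D: "tdepth (App t1 t2) y = tdepth (App t1' t2') y" if "y \<in> set (leaves (App t1 t2))" for y
    using App.prems(4) t' that by blast
  have "t1 = t1'"
  proof (rule App.IH(1)[OF c(1) c'(1) l1[symmetric]], intro ballI)
    fix y assume "y \<in> set (leaves t1)"
    then show "tdepth t1 y = tdepth t1' y" using D[of y] l1 by simp
  qed
  moreover have "t2 = t2'"
  proof (rule App.IH(2)[OF c(2) c'(2) l2[symmetric]], intro ballI)
    fix y assume y: "y \<in> set (leaves t2)"
    then have "y \<notin> set (leaves t1)" using set_leaves_App[OF App.prems(1)] by auto
    then show "tdepth t2 y = tdepth t2' y" using D[of y] y l1 by simp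
  qed
  ultimately show ?case using t' by simp
qed

locale consecutive_tree =
  fixes t :: bterm
  assumes consecutive: "consecutive t"
begin

abbreviation "V \<equiv> set (leaves t)"
abbreviation "rt \<equiv> lm t"
abbreviation "E \<equiv> tree_edges t"
abbreviation "D \<equiv> tdepth t"
abbreviation "p \<equiv> parent t"

lemma edge_iff: "(a, b) \<in> E \<longleftrightarrow> b \<in> V \<and> b \<noteq> rt \<and> a = p b"
  by (rule tree_edges_parent[OF consecutive])

lemma parent_in: "y \<in> V \<Longrightarrow> y \<noteq> rt \<Longrightarrow> p y \<in> V"
  and parent_less: "y \<in> V \<Longrightarrow> y \<noteq> rt \<Longrightarrow> p y < y"
  and D_parent: "y \<in> V \<Longrightarrow> y \<noteq> rt \<Longrightarrow> D y = Suc (D (p y))"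
  using tdepth_parent[OF consecutive] by auto

lemma D_between: "y \<in> V \<Longrightarrow> y \<noteq> rt \<Longrightarrow> p y < j \<Longrightarrow> j < y \<Longrightarrow> D y \<le> D j"
  by (rule tdepth_between[OF consecutive])

lemma D_rt: "D rt = 0"
  by (rule tdepth_lm)

lemma D_eq_0_iff: "y \<in> V \<Longrightarrow> D y = 0 \<longleftrightarrow> y = rt"
  using D_parent D_rt by fastforce

lemma rt_in: "rt \<in> V"
  by (rule lm_in_leaves)

lemma V_eq: "V = {rt..<rt + length (leaves t)}"
  by (rule set_leaves_consecutive[OF consecutive])

lemma relpow_D: "(x, y) \<in> E ^^ k \<Longrightarrow> x \<in> V \<Longrightarrow> y \<in> V \<and> D y = D x + k"
proof (induction k arbitrary: y)
  case 0
  then show ?case by simp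
next
  case (Suc k)
  then obtain b where "(x, b) \<in> E ^^ k" "(b, y) \<in> E" by auto
  with Suc.IH Suc.prems(2) show ?case using D_parent[of y] by (auto simp: edge_iff)
qed

lemma rtrancl_D: "(x, y) \<in> E\<^sup>* \<Longrightarrow> x \<in> V \<Longrightarrow> y \<in> V \<and> x \<le> y \<and> D x \<le> D y"
proof (induction rule: rtrancl_induct)
  case base
  then show ?case by simp
next
  case (step b c)
  then show ?case using parent_less[of c] D_parent[of c] by (auto simp: edge_iff)
qed

lemma rt_relpow: "y \<in> V \<Longrightarrow> (rt, y) \<in> E ^^ D y"
proof (induction y rule: less_induct)
  case (less y)
  show ?case
  proof (cases "y = rt")
    case True
    then show ?thesis using D_rt by simp
  next
    case False
    then have "(rt, p y) \<in> E ^^ D (p y)" "(p y, y) \<in> E"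
      using less parent_in parent_less by (auto simp: edge_iff)
    then show ?thesis using D_parent[OF less.prems False] by auto
  qed
qed

lemma depth_eq: "y \<in> V \<Longrightarrow> depth t y = D y"
  unfolding depth_def
  using rt_relpow relpow_D[of rt y] rt_in D_rt by (intro Least_equality) auto

lemma rtrancl_parent: "(x, y) \<in> E\<^sup>* \<Longrightarrow> y \<noteq> x \<Longrightarrow> (x, p y) \<in> E\<^sup>* \<and> y \<in> V \<and> y \<noteq> rt"
  by (erule rtranclE) (auto simp: edge_iff)

lemma rtrancl_child: "(x, p y) \<in> E\<^sup>* \<Longrightarrow> y \<in> V \<Longrightarrow> y \<noteq> rt \<Longrightarrow> (x, y) \<in> E\<^sup>*"
  by (metis edge_iff rtrancl.rtrancl_into_rtrancl)

lemma parent_not_desc: "x \<in> V \<Longrightarrow> x \<noteq> rt \<Longrightarrow> (x, p x) \<notin> E\<^sup>*"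
  using rtrancl_D[of x "p x"] parent_less[of x] by auto

lemma desc_deeper_between:
  assumes "(x, y) \<in> E\<^sup>*" "x \<in> V" "x < j" "j \<le> y"
  shows "D x < D j"
  using assms(1,3,4)
proof (induction arbitrary: j rule: rtrancl_induct)
  case base
  then show ?case by simp
next
  case (step b c)
  then have c: "c \<in> V" "c \<noteq> rt" "b = p c" and Dc: "D c = Suc (D b)"
    using D_parent[of c] by (auto simp: edge_iff)
  have "D x \<le> D b" using rtrancl_D[OF step.hyps(1) assms(2)] by simp
  moreover have "D c \<le> D j" if "b < j" "j < c"
    using D_between[OF c(1,2)] c(3) that by simp
  ultimately show ?case using step.IH[of j] step.prems Dc by fastforce
qed

lemma deeper_between_desc:
  assumes "x \<in> V" "y \<in> V" "x \<le> y" "\<And>j. x < j \<Longrightarrow> j \<le> y \<Longrightarrow> D x < D j"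
  shows "(x, y) \<in> E\<^sup>*"
  using assms(2-4)
proof (induction y rule: less_induct)
  case (less y)
  show ?case
  proof (cases "y = x")
    case True
    then show ?thesis by simp
  next
    case False
    with less.prems have xy: "x < y" by simp
    moreover have "rt \<le> x" using assms(1) V_eq by simp
    ultimately have y: "y \<noteq> rt" by simp
    have "x \<le> p y"
    proof (rule ccontr)
      assume "\<not> x \<le> p y"
      then have "D y \<le> D x" using D_between[OF less.prems(1) y] xy by simp
      with less.prems(3)[OF xy] show False by simp
    qed
    then have "(x, p y) \<in> E\<^sup>*"
      using less.IH[OF parent_less[OF less.prems(1) y] parent_in[OF less.prems(1) y]]
        less.prems(3) parent_less[OF less.prems(1) y] by simp
    then show ?thesis using rtrancl_child less.prems(1) y by blast
  qed
qed

lemma desc_iff: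
  "x \<in> V \<Longrightarrow> (x, y) \<in> E\<^sup>* \<longleftrightarrow> y \<in> V \<and> x \<le> y \<and> (\<forall>j. x < j \<and> j \<le> y \<longrightarrow> D x < D j)"
  using rtrancl_D desc_deeper_between deeper_between_desc by meson

lemma relpow_restrict_desc:
  "(x, y) \<in> E ^^ k \<Longrightarrow> (x, y) \<in> (E \<inter> desc E x \<times> desc E x) ^^ k"
proof (induction k arbitrary: y)
  case 0
  then show ?case by simp
next
  case (Suc k)
  then obtain b where b: "(x, b) \<in> E ^^ k" "(b, y) \<in> E" by auto
  then have "(x, b) \<in> E\<^sup>*" by (meson relpow_imp_rtrancl)
  with b have "(b, y) \<in> E \<inter> desc E x \<times> desc E x" by (auto simp: desc_def)
  with Suc.IH[OF b(1)] show ?case by auto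
qed

lemma D_le_height:
  assumes x: "x \<in> V" and y: "(x, y) \<in> E\<^sup>*"
  shows "D y \<le> D x + height_sub E x"
proof -
  let ?K = "{k. \<exists>y. (x, y) \<in> (snd (subtree E x)) ^^ k}"
  have "?K \<subseteq> (\<lambda>y. D y - D x) ` V"
  proof
    fix k assume "k \<in> ?K"
    then obtain z where "(x, z) \<in> E ^^ k"
      using relpow_Int_subset[of k E "desc E x \<times> desc E x"] by (auto simp: subtree_def)
    then show "k \<in> (\<lambda>y. D y - D x) ` V" using relpow_D[OF _ x] by force
  qed
  then have "finite ?K" by (rule finite_surj[OF finite_set])
  moreover obtain k where k: "(x, y) \<in> E ^^ k" using y rtrancl_power by blast
  then have "k \<in> ?K" using relpow_restrict_desc by (auto simp: subtree_def)
  ultimately have "k \<le> height_sub E x" unfolding height_sub_def by (rule Max_ge)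
  then show ?thesis using relpow_D[OF k x] by simp
qed

lemma D_plus_rt_le: "y \<in> V \<Longrightarrow> D y + rt \<le> y"
proof (induction y rule: less_induct)
  case (less y)
  show ?case
  proof (cases "y = rt")
    case True
    then show ?thesis using D_rt by simp
  next
    case False
    then show ?thesis
      using less.IH[OF parent_less parent_in] less.prems parent_less[of y] D_parent[of y]
      by fastforce
  qed
qed

lemma desc_rt: "desc E rt = V"
  using rt_relpow rtrancl_D[OF _ rt_in] relpow_imp_rtrancl unfolding desc_def by blast

lemma edges_subset: "E \<subseteq> V \<times> V"
  using edge_iff parent_in by auto

end

section \<open>Homomorphisms of trees into G\<close>

definition tree_hom :: "('v \<times> 'v) set \<Rightarrow> (nat \<Rightarrow> 'v) \<Rightarrow> bterm \<Rightarrow> bool" where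
  "tree_hom G f t \<longleftrightarrow> (\<forall>(a, b) \<in> tree_edges t. (f a, f b) \<in> G)"

lemma eval_Some: "eval G (\<lambda>i. Some (f i)) t = (if tree_hom G f t then Some (f (lm t)) else None)"
  by (induction t) (auto simp: tree_hom_def gmult_def)

lemma satisfies_tree_hom_iff: "satisfies G t t' \<Longrightarrow> tree_hom G f t \<longleftrightarrow> tree_hom G f t'"
  unfolding satisfies_def by (metis eval_Some option.distinct(1))

context consecutive_tree
begin

lemma tree_hom_iff: "tree_hom G f t \<longleftrightarrow> (\<forall>y \<in> V. y \<noteq> rt \<longrightarrow> (f (p y), f y) \<in> G)"
  unfolding tree_hom_def by (auto simp: edge_iff)

lemma tree_hom_walk_depth:
  assumes "walk G w 0 N" "\<And>y. y \<in> V \<Longrightarrow> D y \<le> N"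
  shows "tree_hom G (\<lambda>y. w (D y)) t"
  unfolding tree_hom_iff
proof (intro ballI impI)
  fix y assume "y \<in> V" "y \<noteq> rt"
  then have "D y = Suc (D (p y))" "D y \<le> N" using D_parent assms(2) by blast+
  then show "(w (D (p y)), w (D y)) \<in> G" using assms(1) unfolding walk_def by simp
qed

definition splice :: "nat \<Rightarrow> nat \<Rightarrow> (nat \<Rightarrow> 'v) \<Rightarrow> (nat \<Rightarrow> 'v) \<Rightarrow> nat \<Rightarrow> 'v" where
  "splice x r w u y = (if (x, y) \<in> E\<^sup>* \<and> r \<le> D y then w (D y) else u (D y))"

lemma tree_hom_splice:
  assumes r: "1 \<le> r" "D x \<le> r" and w: "walk G w (r - 1) M"
    and u: "infinite_walk G u" "u (r - 1) = w (r - 1)"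
    and bound: "\<And>y. (x, y) \<in> E\<^sup>* \<Longrightarrow> D y \<le> M"
  shows "tree_hom G (splice x r w u) t"
  unfolding tree_hom_iff
proof (intro ballI impI)
  fix y assume y: "y \<in> V" "y \<noteq> rt"
  let ?a = "p y" and ?W = "\<lambda>z. (x, z) \<in> E\<^sup>* \<and> r \<le> D z"
  have Dy: "D y = Suc (D ?a)" using D_parent[OF y] .
  have wE: "(w k, w (Suc k)) \<in> G" if "r - 1 \<le> k" "k < M" for k
    using w that unfolding walk_def by simp
  show "(splice x r w u ?a, splice x r w u y) \<in> G"
  proof (cases "?W y")
    case True
    then have yM: "D y \<le> M" using bound by blast
    show ?thesis
    proof (cases "?W ?a")
      case True
      then show ?thesis using \<open>?W y\<close> wE[of "D ?a"] Dy yM unfolding splice_def by auto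
    next
      case False
      have "D ?a = r - 1"
      proof (cases "y = x")
        case True
        then show ?thesis using Dy r(2) \<open>?W y\<close> by simp
      next
        case False
        then have "(x, ?a) \<in> E\<^sup>*" using rtrancl_parent \<open>?W y\<close> by blast
        then have "\<not> r \<le> D ?a" using \<open>\<not> ?W ?a\<close> by simp
        then show ?thesis using \<open>?W y\<close> Dy by linarith
      qed
      then show ?thesis using \<open>?W y\<close> False wE[of "r - 1"] Dy yM u(2) r unfolding splice_def by simp
    qed
  next
    case False
    then have "\<not> ?W ?a" using rtrancl_child[OF _ y] Dy by auto
    then have "splice x r w u ?a = u (D ?a)" "splice x r w u y = u (D y)"
      using False unfolding splice_def by auto
    then show ?thesis using u(1) Dy unfolding infinite_walk_def by simp
  qed
qed

end

section \<open>Identities of B_n satisfied in A(G)\<close>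

lemma omega_attained:
  assumes fin: "finite (Omega t1 t2)" and z: "(0, h0) \<in> Omega t1 t2"
  shows "\<exists>d h. (d, h) \<in> Omega t1 t2 \<and> d \<le> r \<and> d + h = omega t1 t2 r"
proof -
  let ?S = "{d + h | d h. (d, h) \<in> Omega t1 t2}"
  let ?Sr = "{d + h | d h. (d, h) \<in> Omega t1 t2 \<and> d \<le> r}"
  have "?S = case_prod (+) ` Omega t1 t2" "?Sr = case_prod (+) ` (Omega t1 t2 \<inter> {(d, h). d \<le> r})"
    by auto
  then have fin': "finite ?S" "finite ?Sr" using fin by simp_all
  have ne: "?S \<noteq> {}" "?Sr \<noteq> {}" using z by blast+
  show ?thesis
  proof (cases "r < xi t1 t2")
    case True
    then have "omega t1 t2 r = Min ?Sr" by (simp add: omega_def)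
    then show ?thesis using Min_in[OF fin'(2) ne(2)] by fastforce
  next
    case False
    then have "omega t1 t2 r = Min ?S" "Min ?S \<le> r" by (simp_all add: omega_def xi_def)
    then show ?thesis using Min_in[OF fin'(1) ne(1)] by fastforce
  qed
qed

locale satisfied_identity =
  fixes n :: nat and t1 t2 :: bterm and G :: "('v \<times> 'v) set"
  assumes B1: "t1 \<in> B n" and B2: "t2 \<in> B n" and neq: "t1 \<noteq> t2" and sat: "satisfies G t1 t2"
begin

sublocale T1: consecutive_tree t1
  using B_consecutive(1)[OF B1] by unfold_locales

sublocale T2: consecutive_tree t2
  using B_consecutive(1)[OF B2] by unfold_locales

abbreviation "L \<equiv> Lpar t1 t2"

lemma swap: "satisfied_identity n t2 t1 G"
  using B1 B2 neq sat by unfold_locales (auto simp: satisfies_def)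

lemma V_eq: "T1.V = {1..n}" "T2.V = T1.V"
  using B_consecutive(3)[OF B1] B_consecutive(3)[OF B2] by simp_all

lemma rt_eq: "T1.rt = 1" "T2.rt = T1.rt"
  using B_consecutive(2)[OF B1] B_consecutive(2)[OF B2] by simp_all

lemma tree_hom_swap: "tree_hom G f t1 \<longleftrightarrow> tree_hom G f t2"
  by (rule satisfies_tree_hom_iff[OF sat])

lemma depth_differs: "\<exists>u \<in> T1.V. T1.D u \<noteq> T2.D u"
  using consecutive_tdepth_inj[OF T1.consecutive T2.consecutive] neq B1 B2 by (auto simp: B_def)

definition agree_upto :: "nat \<Rightarrow> bool" where
  "agree_upto m \<longleftrightarrow> (\<forall>x \<in> T1.V. T1.D x \<le> m \<or> T2.D x \<le> m \<longrightarrow> T1.D x = T2.D x)"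

lemma Lpar_eq: "L = Greatest agree_upto"
  unfolding Lpar_def agree_upto_def
  using T1.depth_eq T2.depth_eq V_eq by (intro arg_cong[where f = Greatest] ext) auto

lemma agree_upto_0: "agree_upto 0"
  unfolding agree_upto_def
proof (intro ballI impI)
  fix x assume "x \<in> T1.V" "T1.D x \<le> 0 \<or> T2.D x \<le> 0"
  then have "x = T1.rt" using T1.D_eq_0_iff T2.D_eq_0_iff[of x] V_eq(2) rt_eq(2) by auto
  then show "T1.D x = T2.D x" using T1.D_rt T2.D_rt rt_eq(2) by simp
qed

lemma agree_upto_bounded: obtains b where "\<And>m. agree_upto m \<Longrightarrow> m \<le> b"
proof -
  obtain u where "u \<in> T1.V" "T1.D u \<noteq> T2.D u" using depth_differs by blast
  then have "m \<le> T1.D u" if "agree_upto m" for m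
    using that unfolding agree_upto_def by fastforce
  then show ?thesis using that by blast
qed

lemma L_agree: "y \<in> T1.V \<Longrightarrow> T1.D y \<le> L \<or> T2.D y \<le> L \<Longrightarrow> T1.D y = T2.D y"
proof -
  obtain b where "\<And>m. agree_upto m \<Longrightarrow> m \<le> b" using agree_upto_bounded by blast
  then have "agree_upto L" unfolding Lpar_eq using agree_upto_0 by (rule GreatestI_nat[rotated])
  then show "y \<in> T1.V \<Longrightarrow> T1.D y \<le> L \<or> T2.D y \<le> L \<Longrightarrow> T1.D y = T2.D y"
    unfolding agree_upto_def by blast
qed

lemma L_witness:
  "\<exists>u \<in> T1.V. (T1.D u = Suc L \<and> Suc L < T2.D u) \<or> (T2.D u = Suc L \<and> Suc L < T1.D u)"
proof -
  obtain b where b: "\<And>m. agree_upto m \<Longrightarrow> m \<le> b" using agree_upto_bounded by blast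
  have "\<not> agree_upto (Suc L)"
  proof
    assume "agree_upto (Suc L)"
    then have "Suc L \<le> L" unfolding Lpar_eq using b by (rule Greatest_le_nat)
    then show False by simp
  qed
  then obtain u where u: "u \<in> T1.V" "T1.D u \<le> Suc L \<or> T2.D u \<le> Suc L" "T1.D u \<noteq> T2.D u"
    unfolding agree_upto_def by blast
  then have "\<not> (T1.D u \<le> L \<or> T2.D u \<le> L)" using L_agree by blast
  with u(2,3) have "(T1.D u = Suc L \<and> Suc L < T2.D u) \<or> (T2.D u = Suc L \<and> Suc L < T1.D u)"
    by linarith
  with u(1) show ?thesis by blast
qed

lemma Lpar_swap: "Lpar t2 t1 = L"
  unfolding Lpar_def V_eq(2) by (intro arg_cong[where f = Greatest] ext) auto

lemma Delta_swap: "Delta t2 t1 = Delta t1 t2"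
  unfolding Delta_def using V_eq by auto

lemma rt_in_Delta: "T1.rt \<in> Delta t1 t2"
proof -
  have "T1.E \<noteq> T2.E"
  proof
    assume e: "T1.E = T2.E"
    have "T1.D y = T2.D y" if "y \<in> T1.V" for y
    proof -
      have "depth t1 y = depth t2 y" unfolding depth_def using e rt_eq by simp
      then show ?thesis using T1.depth_eq[OF that] T2.depth_eq[of y] that V_eq by simp
    qed
    then show False using depth_differs by blast
  qed
  then show ?thesis
    unfolding Delta_def subtree_def
    using T1.desc_rt T2.desc_rt T1.edges_subset T2.edges_subset T1.rt_in V_eq rt_eq by auto
qed

lemma Delta_subset: "Delta t1 t2 \<subseteq> T1.V"
  by (auto simp: Delta_def)

lemma omega_witness:
  obtains x where "x \<in> Delta t1 t2"
    "(T1.D x \<le> r \<and> T1.D x + height_sub T1.E x = omega t1 t2 r)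
      \<or> (T2.D x \<le> r \<and> T2.D x + height_sub T2.E x = omega t1 t2 r)"
proof -
  have depths: "depth t1 x = T1.D x" "depth t2 x = T2.D x" if "x \<in> Delta t1 t2" for x
    using that Delta_subset T1.depth_eq T2.depth_eq V_eq by auto
  have "finite (Delta t1 t2)" using finite_subset[OF Delta_subset] by simp
  then have "finite (Omega t1 t2)" unfolding Omega_def by auto
  moreover have "(0, height_sub T1.E T1.rt) \<in> Omega t1 t2"
    unfolding Omega_def using rt_in_Delta depths(1)[OF rt_in_Delta] T1.D_rt by auto
  ultimately obtain d h where "(d, h) \<in> Omega t1 t2" "d \<le> r" "d + h = omega t1 t2 r"
    using omega_attained by blast
  then show ?thesis using that depths unfolding Omega_def by auto
qed

lemma parent_eq_if_relative_depths:
  assumes U: "\<And>y. (x, y) \<in> T1.E\<^sup>* \<longleftrightarrow> (x, y) \<in> T2.E\<^sup>*"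
    and rel: "\<And>y. (x, y) \<in> T1.E\<^sup>* \<Longrightarrow> T1.D y + T2.D x = T2.D y + T1.D x"
    and y: "(x, y) \<in> T1.E\<^sup>*" "y \<noteq> x"
  shows "T1.p y = T2.p y"
proof -
  have d1: "(x, T1.p y) \<in> T1.E\<^sup>*" "y \<in> T1.V" "y \<noteq> T1.rt" using T1.rtrancl_parent[OF y] by auto
  have d2: "(x, T2.p y) \<in> T1.E\<^sup>*" using T2.rtrancl_parent[of x y] y U by auto
  have y2: "y \<in> T2.V" "y \<noteq> T2.rt" using d1 V_eq rt_eq by auto
  have Dy: "T1.D y = Suc (T1.D (T1.p y))" "T2.D y = Suc (T2.D (T2.p y))"
    using T1.D_parent[OF d1(2,3)] T2.D_parent[OF y2] by auto
  show ?thesis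
  proof (rule linorder_cases[of "T1.p y" "T2.p y"])
    assume "T1.p y < T2.p y"
    then have "T1.D y \<le> T1.D (T2.p y)" using T1.D_between[OF d1(2,3)] T2.parent_less[OF y2] by simp
    then show ?thesis using rel[OF d2] rel[OF y(1)] Dy by simp
  next
    assume "T2.p y < T1.p y"
    then have "T2.D y \<le> T2.D (T1.p y)" using T2.D_between[OF y2] T1.parent_less[OF d1(2,3)] by simp
    then show ?thesis using rel[OF d1(1)] rel[OF y(1)] Dy by simp
  qed simp
qed

lemma restricted_edges_subset:
  assumes x: "x \<in> T1.V"
    and U: "\<And>y. (x, y) \<in> T1.E\<^sup>* \<longleftrightarrow> (x, y) \<in> T2.E\<^sup>*"
    and rel: "\<And>y. (x, y) \<in> T1.E\<^sup>* \<Longrightarrow> T1.D y + T2.D x = T2.D y + T1.D x"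
  shows "T1.E \<inter> desc T1.E x \<times> desc T1.E x \<subseteq> T2.E"
proof safe
  fix a b assume ab: "(a, b) \<in> T1.E" "a \<in> desc T1.E x" "b \<in> desc T1.E x"
  then have b: "b \<in> T1.V" "b \<noteq> T1.rt" "a = T1.p b" by (auto simp: T1.edge_iff)
  have "b \<noteq> x" using T1.parent_not_desc[OF x] ab(2) b by (auto simp: desc_def)
  then have "T1.p b = T2.p b"
    using parent_eq_if_relative_depths[OF U rel] ab(3) by (auto simp: desc_def)
  then show "(a, b) \<in> T2.E" using b V_eq rt_eq by (simp add: T2.edge_iff)
qed

lemma subtree_eqI:
  assumes x: "x \<in> T1.V"
    and U: "\<And>y. (x, y) \<in> T1.E\<^sup>* \<longleftrightarrow> (x, y) \<in> T2.E\<^sup>*"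
    and rel: "\<And>y. (x, y) \<in> T1.E\<^sup>* \<Longrightarrow> T1.D y + T2.D x = T2.D y + T1.D x"
  shows "subtree T1.E x = subtree T2.E x"
proof -
  interpret S: satisfied_identity n t2 t1 G by (rule swap)
  have desc: "desc T2.E x = desc T1.E x" using U by (auto simp: desc_def)
  have "T2.E \<inter> desc T2.E x \<times> desc T2.E x \<subseteq> T1.E"
    using S.restricted_edges_subset x U rel V_eq by (metis add.commute)
  then show ?thesis
    using restricted_edges_subset[OF x U rel] unfolding subtree_def desc by auto
qed

lemma desc_eq_if_shallow:
  assumes x: "x \<in> T1.V" "T1.D x \<le> L"
  shows "(x, y) \<in> T1.E\<^sup>* \<longleftrightarrow> (x, y) \<in> T2.E\<^sup>*"
proof -
  have "T1.D x < T1.D j \<longleftrightarrow> T2.D x < T2.D j" if "j \<in> T1.V" for j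
    using L_agree[OF that] L_agree[OF x(1)] x(2) by (cases "T1.D j \<le> L \<or> T2.D j \<le> L") auto
  moreover have "j \<in> T1.V" if "x < j" "j \<le> y" "y \<in> T1.V" for j
    using that x(1) V_eq by auto
  ultimately show ?thesis
    unfolding T1.desc_iff[OF x(1)] T2.desc_iff[of x, unfolded V_eq(2), OF x(1)] V_eq(2) by blast
qed

lemma depth_plus_height_gt_L:
  assumes "x \<in> Delta t1 t2"
  shows "L < T1.D x + height_sub T1.E x"
proof (rule ccontr)
  assume "\<not> ?thesis"
  then have shallow: "T1.D y \<le> L" if "(x, y) \<in> T1.E\<^sup>*" for y
    using T1.D_le_height that assms Delta_subset by fastforce
  have x: "x \<in> T1.V" "T1.D x \<le> L" using assms Delta_subset shallow[of x] by auto
  note U = desc_eq_if_shallow[OF x]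
  have "T1.D y + T2.D x = T2.D y + T1.D x" if "(x, y) \<in> T1.E\<^sup>*" for y
    using L_agree[of y] L_agree[OF x(1)] shallow[OF that] x(2) T1.rtrancl_D[OF that x(1)] by simp
  then have "subtree T1.E x = subtree T2.E x" using subtree_eqI[OF x(1) U] by blast
  with assms show False by (simp add: Delta_def)
qed

text \<open>Transport the spliced homomorphism of G(t1) to G(t2). At an edge of G(t2) leaving the
  subtree of x at depth at least r, either the edge ends outside that subtree, where the map
  follows u, which has long walks, or it goes back up the walk w, closing a cycle; in both cases w
  has long walks at the start of the edge.\<close>
lemma spliced_edge_descends:
  assumes r: "1 \<le> r" "T1.D x \<le> r" and w: "walk G w (r - 1) M"
    and u: "infinite_walk G u" "u (r - 1) = w (r - 1)"
    and bound: "\<And>y. (x, y) \<in> T1.E\<^sup>* \<Longrightarrow> T1.D y \<le> M"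
    and y: "y \<in> T1.V" "y \<noteq> T1.rt" "(x, T2.p y) \<in> T1.E\<^sup>*" "r \<le> T1.D (T2.p y)"
    and stuck: "\<not> has_long_walks G (w (T1.D (T2.p y)))"
  shows "(x, y) \<in> T1.E\<^sup>* \<and> T1.D (T2.p y) < T1.D y"
proof (rule ccontr)
  assume contra: "\<not> ?thesis"
  let ?a = "T2.p y" and ?\<sigma> = "T1.splice x r w u"
  have "tree_hom G ?\<sigma> t2" using T1.tree_hom_splice[OF r w u bound] tree_hom_swap by simp
  moreover have "y \<in> T2.V" "y \<noteq> T2.rt" using y(1,2) V_eq(2) rt_eq(2) by auto
  ultimately have edge: "(?\<sigma> ?a, ?\<sigma> y) \<in> G" unfolding T2.tree_hom_iff by blast
  have \<sigma>a: "?\<sigma> ?a = w (T1.D ?a)" using y(3,4) by (simp add: T1.splice_def)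
  have "has_long_walks G (w (T1.D ?a))"
  proof (cases "(x, y) \<in> T1.E\<^sup>* \<and> r \<le> T1.D y")
    case False
    then have "?\<sigma> y = u (T1.D y)" unfolding T1.splice_def by (rule if_not_P)
    then have "(w (T1.D ?a), u (T1.D y)) \<in> G" using edge \<sigma>a by simp
    then show ?thesis by (rule has_long_walks_edge[OF _ infinite_walk_has_long_walks[OF u(1)]])
  next
    case True
    then have le: "T1.D y \<le> T1.D ?a" using contra by simp
    have "(w (T1.D ?a), w (T1.D y)) \<in> G" using edge \<sigma>a True by (simp add: T1.splice_def)
    moreover have "walk G w (T1.D y) (T1.D ?a)"
      using walk_mono[OF w, of "T1.D y" "T1.D ?a"] True bound[OF y(3)] by auto
    ultimately have "nontrivial_scc G (w (T1.D ?a))"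
      using nontrivial_scc_closed_walk[of G w "T1.D y" "T1.D ?a" "T1.D ?a"] le by simp
    then show ?thesis by (rule nontrivial_scc_has_long_walks)
  qed
  with stuck show False ..
qed

lemma desc_transfer:
  assumes key: "\<And>y. y \<in> T1.V \<Longrightarrow> y \<noteq> T1.rt \<Longrightarrow> (x, T2.p y) \<in> T1.E\<^sup>*
      \<Longrightarrow> (x, y) \<in> T1.E\<^sup>* \<and> T1.D (T2.p y) < T1.D y"
    and y: "(x, y) \<in> T2.E\<^sup>*"
  shows "(x, y) \<in> T1.E\<^sup>* \<and> T2.D y + T1.D x \<le> T1.D y + T2.D x"
  using y
proof (induction rule: rtrancl_induct)
  case base
  then show ?case by simp
next
  case (step b c)
  then have c: "c \<in> T1.V" "c \<noteq> T1.rt" "b = T2.p c" using V_eq rt_eq by (auto simp: T2.edge_iff)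
  then have "T2.D c = Suc (T2.D b)" using T2.D_parent V_eq rt_eq by simp
  with key[OF c(1,2)] step.IH c(3) show ?case by fastforce
qed

lemma shallow_edge_descends:
  assumes x: "x \<in> T1.V" "T1.D x \<le> L"
    and y: "y \<in> T1.V" "y \<noteq> T1.rt" "(x, T2.p y) \<in> T1.E\<^sup>*" "T1.D (T2.p y) \<le> L"
  shows "(x, y) \<in> T1.E\<^sup>* \<and> T1.D (T2.p y) < T1.D y"
proof
  note U = desc_eq_if_shallow[OF x]
  have y2: "y \<in> T2.V" "y \<noteq> T2.rt" using y V_eq rt_eq by auto
  show "(x, y) \<in> T1.E\<^sup>*" using T2.rtrancl_child[OF _ y2] U y(3) by blast
  have "T2.p y \<in> T1.V" using T2.parent_in[OF y2] V_eq by simp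
  then have "T2.D y = Suc (T1.D (T2.p y))"
    using L_agree[of "T2.p y"] y(4) T2.D_parent[OF y2] by simp
  then show "T1.D (T2.p y) < T1.D y" using L_agree[OF y(1)] y(4) by (cases "T1.D y \<le> L") auto
qed

lemma shallow_desc_depth_le:
  assumes r: "1 \<le> r" "r \<le> Suc L" and w: "walk G w (r - 1) M"
    and u: "infinite_walk G u" "u (r - 1) = w (r - 1)"
    and x: "x \<in> T1.V" "T1.D x \<le> L" "T1.D x \<le> r"
    and bound: "\<And>y. (x, y) \<in> T1.E\<^sup>* \<Longrightarrow> T1.D y \<le> M"
    and stuck: "\<not> has_long_walks G (w (Suc L))"
    and y: "(x, y) \<in> T2.E\<^sup>*"
  shows "T2.D y \<le> T1.D y"
proof -
  have "(x, z) \<in> T1.E\<^sup>* \<and> T1.D (T2.p z) < T1.D z"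
    if z: "z \<in> T1.V" "z \<noteq> T1.rt" "(x, T2.p z) \<in> T1.E\<^sup>*" for z
  proof (cases "T1.D (T2.p z) \<le> L")
    case True
    then show ?thesis using shallow_edge_descends[OF x(1,2) z] by blast
  next
    case False
    have "walk G w (Suc L) M" "Suc L \<le> T1.D (T2.p z)" using walk_mono[OF w] r(2) False by auto
    then have "\<not> has_long_walks G (w (T1.D (T2.p z)))"
      using stuck has_long_walks_walk[of G w "Suc L" M "T1.D (T2.p z)"] bound[OF z(3)] by blast
    then show ?thesis using spliced_edge_descends[OF r(1) x(3) w u bound z] False r(2) by simp
  qed
  then show ?thesis using desc_transfer[OF _ y] L_agree[OF x(1)] x(2) by simp
qed

lemma shallow_case:
  assumes r: "1 \<le> r" "r \<le> Suc L" and w: "walk G w (r - 1) M"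
    and u: "infinite_walk G u" "u (r - 1) = w (r - 1)"
    and x: "x \<in> Delta t1 t2" "T1.D x \<le> L" "T1.D x \<le> r" "T1.D x + height_sub T1.E x = M"
  shows "has_long_walks G (w (Suc L))"
proof (rule ccontr)
  assume stuck: "\<not> ?thesis"
  interpret S: satisfied_identity n t2 t1 G by (rule swap)
  have xV: "x \<in> T1.V" using x(1) Delta_subset by blast
  have Dx: "T2.D x = T1.D x" using L_agree[OF xV] x(2) by simp
  note U = desc_eq_if_shallow[OF xV x(2)]
  have bound: "T1.D y \<le> M" if "(x, y) \<in> T1.E\<^sup>*" for y
    using T1.D_le_height[OF xV that] x(4) by simp
  have le21: "T2.D y \<le> T1.D y" if "(x, y) \<in> T2.E\<^sup>*" for y
    by (rule shallow_desc_depth_le[OF r w u xV x(2,3) bound stuck that])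
  have le12: "T1.D y \<le> T2.D y" if "(x, y) \<in> T1.E\<^sup>*" for y
  proof (rule S.shallow_desc_depth_le[OF _ _ w u])
    show "1 \<le> r" "r \<le> Suc (Lpar t2 t1)" using r Lpar_swap by auto
    show "x \<in> T2.V" "T2.D x \<le> Lpar t2 t1" "T2.D x \<le> r" using xV x(2,3) Dx V_eq Lpar_swap by auto
    show "T2.D y \<le> M" if "(x, y) \<in> T2.E\<^sup>*" for y using le21 bound U that by fastforce
    show "\<not> has_long_walks G (w (Suc (Lpar t2 t1)))" using stuck Lpar_swap by simp
    show "(x, y) \<in> T1.E\<^sup>*" by (rule that)
  qed
  have "T1.D y + T2.D x = T2.D y + T1.D x" if "(x, y) \<in> T1.E\<^sup>*" for y
    using le12[OF that] le21[of y] U[of y] that Dx by simp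
  then have "subtree T1.E x = subtree T2.E x" by (rule subtree_eqI[OF xV U])
  with x(1) show False by (simp add: Delta_def)
qed

lemma deep_desc_transfer:
  assumes r: "1 \<le> r" "T1.D x = r" and w: "walk G w (r - 1) M"
    and u: "infinite_walk G u" "u (r - 1) = w (r - 1)"
    and x: "x \<in> T1.V" and bound: "\<And>y. (x, y) \<in> T1.E\<^sup>* \<Longrightarrow> T1.D y \<le> M"
    and stuck: "\<And>k. r \<le> k \<Longrightarrow> k \<le> M \<Longrightarrow> \<not> has_long_walks G (w k)"
    and y: "(x, y) \<in> T2.E\<^sup>*"
  shows "(x, y) \<in> T1.E\<^sup>* \<and> T2.D y + T1.D x \<le> T1.D y + T2.D x"
proof (rule desc_transfer[OF _ y])
  fix z assume z: "z \<in> T1.V" "z \<noteq> T1.rt" "(x, T2.p z) \<in> T1.E\<^sup>*"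
  have "r \<le> T1.D (T2.p z)" using T1.rtrancl_D[OF z(3) x] r(2) by simp
  moreover have "\<not> has_long_walks G (w (T1.D (T2.p z)))"
    using stuck calculation bound[OF z(3)] by blast
  ultimately show "(x, z) \<in> T1.E\<^sup>* \<and> T1.D (T2.p z) < T1.D z"
    using spliced_edge_descends[OF r(1) _ w u bound z] r(2) by simp
qed

lemma spliced_edge_into:
  assumes r: "1 \<le> r" "T1.D x = r" and w: "walk G w (r - 1) M"
    and u: "infinite_walk G u" "u (r - 1) = w (r - 1)"
    and x: "x \<in> T1.V" "x \<noteq> T1.rt" and bound: "\<And>y. (x, y) \<in> T1.E\<^sup>* \<Longrightarrow> T1.D y \<le> M"
  shows "(u (T1.D (T2.p x)), w r) \<in> G"
proof -
  let ?\<sigma> = "T1.splice x r w u"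
  have x2: "x \<in> T2.V" "x \<noteq> T2.rt" using x V_eq rt_eq by auto
  have "(x, T2.p x) \<notin> T1.E\<^sup>*" using T1.rtrancl_D[OF _ x(1)] T2.parent_less[OF x2] by fastforce
  moreover have "tree_hom G ?\<sigma> t2"
    using T1.tree_hom_splice[OF r(1) _ w u bound] r(2) tree_hom_swap by simp
  then have "(?\<sigma> (T2.p x), ?\<sigma> x) \<in> G" using x2 unfolding T2.tree_hom_iff by blast
  ultimately show ?thesis using r(2) by (simp add: T1.splice_def)
qed

lemma realign_infinite_walk:
  assumes u: "infinite_walk G u" "\<And>b. Suc L \<le> b \<Longrightarrow> nontrivial_scc G (u b)" and a: "a \<in> T1.V"
  obtains Q where "infinite_walk G Q" "Q (T2.D a) = u (T1.D a)"
proof (cases "T1.D a \<le> L")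
  case True
  then have "T2.D a = T1.D a" using L_agree[OF a] by simp
  then show ?thesis using that u(1) by simp
next
  case False
  then show ?thesis using nontrivial_scc_infinite_walk[OF u(2)] that by (metis not_less_eq_eq)
qed

text \<open>A second splicing, now for G(t2), follows w shifted so that depth T2.D x is mapped to
  Suc L; the edge of G(t2) into x is covered by the edge found in the first splicing.\<close>
lemma deep_case:
  assumes w: "walk G w L M" and u: "infinite_walk G u" "u L = w L"
    and u_nontrivial: "\<And>b. Suc L \<le> b \<Longrightarrow> nontrivial_scc G (u b)"
    and x: "x \<in> Delta t1 t2" "T1.D x = Suc L" "T1.D x + height_sub T1.E x = M"
  shows "has_long_walks G (w (Suc L))"
proof (rule ccontr)
  assume "\<not> ?thesis"
  then have stuck: "\<not> has_long_walks G (w k)" if "Suc L \<le> k" "k \<le> M" for k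
    using has_long_walks_walk[OF walk_mono[OF w], of "Suc L" M k] that by auto
  interpret S: satisfied_identity n t2 t1 G by (rule swap)
  have x1: "x \<in> T1.V" "x \<noteq> T1.rt" using x(1,2) Delta_subset T1.D_rt by auto
  then have x2: "x \<in> T2.V" "x \<noteq> T2.rt" using V_eq rt_eq by auto
  have bound: "T1.D y \<le> M" if "(x, y) \<in> T1.E\<^sup>*" for y
    using T1.D_le_height[OF x1(1) that] x(3) by simp
  have w1: "walk G w (Suc L - 1) M" and u1: "u (Suc L - 1) = w (Suc L - 1)" using w u(2) by simp_all
  have R1: "(x, y) \<in> T1.E\<^sup>* \<and> T2.D y + T1.D x \<le> T1.D y + T2.D x" if "(x, y) \<in> T2.E\<^sup>*" for y
    using deep_desc_transfer[OF _ x(2) w1 u(1) u1 x1(1) bound stuck that] by simp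
  let ?p = "T2.p x" and ?d = "T2.D x"
  have "\<not> ?d \<le> L" using L_agree[OF x1(1)] x(2) by auto
  then have d: "Suc L \<le> ?d" "?d = Suc (T2.D ?p)" using T2.D_parent[OF x2] by auto
  obtain Q where Q: "infinite_walk G Q" "Q (?d - 1) = u (T1.D ?p)"
    using realign_infinite_walk[OF u(1) u_nontrivial] T2.parent_in[OF x2] V_eq d(2) by auto
  define w' where "w' k = (if k < ?d then Q k else w (k + Suc L - ?d))" for k
  have "(Q (?d - 1), w (Suc L)) \<in> G"
    using spliced_edge_into[OF _ x(2) w1 u(1) u1 x1 bound] Q(2) by simp
  then have w': "walk G w' (?d - 1) (M + ?d - Suc L)"
    unfolding w'_def using walk_after_edge[OF walk_mono[OF w]] d(1) by fastforce
  have R2: "(x, y) \<in> T2.E\<^sup>* \<and> T1.D y + T2.D x \<le> T2.D y + T1.D x" if "(x, y) \<in> T1.E\<^sup>*" for y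
  proof (rule S.deep_desc_transfer[OF _ refl w' Q(1) _ x2(1) _ _ that])
    show "1 \<le> ?d" "Q (?d - 1) = w' (?d - 1)" using d(1) by (simp_all add: w'_def)
    show "T2.D y \<le> M + ?d - Suc L" if "(x, y) \<in> T2.E\<^sup>*" for y
      using R1[OF that] bound x(2) by fastforce
    show "\<not> has_long_walks G (w' k)" if "?d \<le> k" "k \<le> M + ?d - Suc L" for k
      using stuck[of "k + Suc L - ?d"] that d(1) by (simp add: w'_def)
  qed
  have "subtree T1.E x = subtree T2.E x"
    using subtree_eqI[OF x1(1)] R1 R2 by (meson antisym)
  with x(1) show False by (simp add: Delta_def)
qed

lemma long_walks_from_witness:
  assumes r: "1 \<le> r" "r \<le> Suc L" and w: "walk G w (r - 1) M"
    and u: "infinite_walk G u" "u (r - 1) = w (r - 1)" "\<And>b. Suc L \<le> b \<Longrightarrow> nontrivial_scc G (u b)"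
    and x: "x \<in> Delta t1 t2" "T1.D x \<le> r" "T1.D x + height_sub T1.E x = M"
  shows "has_long_walks G (w (Suc L))"
proof (cases "T1.D x \<le> L")
  case True
  then show ?thesis by (rule shallow_case[OF r w u(1,2) x(1) _ x(2,3)])
next
  case False
  then have "T1.D x = Suc L" "r = Suc L" using x(2) r(2) by auto
  then show ?thesis using deep_case[OF _ u(1) _ u(3) x(1) _ x(3)] w u(2) by simp
qed

lemma long_walks_at_Suc_L:
  assumes r: "1 \<le> r" "r \<le> Suc L" and w: "walk G w (r - 1) (omega t1 t2 r)"
    and u: "infinite_walk G u" "u (r - 1) = w (r - 1)" "\<And>b. Suc L \<le> b \<Longrightarrow> nontrivial_scc G (u b)"
  shows "has_long_walks G (w (Suc L))"
proof -
  interpret S: satisfied_identity n t2 t1 G by (rule swap)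
  obtain x where x: "x \<in> Delta t1 t2"
    "(T1.D x \<le> r \<and> T1.D x + height_sub T1.E x = omega t1 t2 r)
      \<or> (T2.D x \<le> r \<and> T2.D x + height_sub T2.E x = omega t1 t2 r)"
    by (rule omega_witness)
  from x(2) show ?thesis
  proof (elim disjE conjE)
    assume "T1.D x \<le> r" "T1.D x + height_sub T1.E x = omega t1 t2 r"
    then show ?thesis using long_walks_from_witness[OF r w u(1,2) _ x(1)] u(3) by blast
  next
    assume "T2.D x \<le> r" "T2.D x + height_sub T2.E x = omega t1 t2 r"
    then show ?thesis
      using S.long_walks_from_witness[OF _ _ w] r u x(1) Lpar_swap Delta_swap by simp
  qed
qed

lemma L_less_omega: "L < omega t1 t2 r"
proof -
  interpret S: satisfied_identity n t2 t1 G by (rule swap)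
  obtain x where "x \<in> Delta t1 t2"
    "(T1.D x \<le> r \<and> T1.D x + height_sub T1.E x = omega t1 t2 r)
      \<or> (T2.D x \<le> r \<and> T2.D x + height_sub T2.E x = omega t1 t2 r)"
    by (rule omega_witness)
  then show ?thesis
    using depth_plus_height_gt_L S.depth_plus_height_gt_L Lpar_swap Delta_swap by fastforce
qed

lemma nontrivial_from_witness:
  assumes U: "walk G U 0 N" and bound: "\<And>y. y \<in> T1.V \<Longrightarrow> T1.D y \<le> N \<and> T2.D y \<le> N"
    and u: "u \<in> T1.V" "T2.D u = Suc L" "Suc L < T1.D u"
  shows "nontrivial_scc G (U (Suc L))"
proof -
  have "tree_hom G (\<lambda>y. U (T2.D y)) t2" using T2.tree_hom_walk_depth[OF U] bound V_eq by auto
  then have "tree_hom G (\<lambda>y. U (T2.D y)) t1" using tree_hom_swap by simp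
  moreover have u1: "u \<noteq> T1.rt" using u(3) T1.D_rt by auto
  ultimately have edge: "(U (T2.D (T1.p u)), U (Suc L)) \<in> G"
    using u(1,2) unfolding T1.tree_hom_iff by metis
  have a: "T1.p u \<in> T1.V" "T1.D u = Suc (T1.D (T1.p u))"
    using T1.parent_in[OF u(1) u1] T1.D_parent[OF u(1) u1] by auto
  then have "\<not> T2.D (T1.p u) \<le> L" using L_agree[OF a(1)] u(3) by fastforce
  moreover have "walk G U (Suc L) (T2.D (T1.p u))" using walk_mono[OF U] bound[OF a(1)] by simp
  ultimately show ?thesis
    using nontrivial_scc_closed_walk[of G U "Suc L" "T2.D (T1.p u)" "Suc L"] edge by simp
qed

lemma nontrivial_at_Suc_L:
  assumes U: "walk G U 0 N" and bound: "\<And>y. y \<in> T1.V \<Longrightarrow> T1.D y \<le> N \<and> T2.D y \<le> N"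
  shows "nontrivial_scc G (U (Suc L))"
proof -
  interpret S: satisfied_identity n t2 t1 G by (rule swap)
  obtain u where u: "u \<in> T1.V"
    "(T1.D u = Suc L \<and> Suc L < T2.D u) \<or> (T2.D u = Suc L \<and> Suc L < T1.D u)"
    using L_witness by blast
  from u(2) show ?thesis
  proof (elim disjE conjE)
    assume "T1.D u = Suc L" "Suc L < T2.D u"
    then show ?thesis using S.nontrivial_from_witness[OF U, of u] bound u(1) V_eq Lpar_swap by auto
  next
    assume "T2.D u = Suc L" "Suc L < T1.D u"
    then show ?thesis using nontrivial_from_witness[OF U _ u(1)] bound by blast
  qed
qed

lemma nontrivial_scc_after_walks:
  assumes v: "walk G v 0 (Suc L)" "nontrivial_scc G (v (Suc L))"
    and r: "1 \<le> r" "r \<le> Suc L" and w: "w (r - 1) = v (r - 1)" "walk G w (r - 1) (omega t1 t2 r)"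
  shows "nontrivial_scc G (w (Suc L))"
proof -
  obtain u where u: "infinite_walk G u" "\<And>k. k \<le> Suc L \<Longrightarrow> u k = v k"
    "\<And>b. Suc L \<le> b \<Longrightarrow> nontrivial_scc G (u b)"
    using infinite_walk_extension[OF v] by blast
  have "has_long_walks G (w (Suc L))"
    using long_walks_at_Suc_L[OF r w(2) u(1) _ u(3)] u(2)[of "r - 1"] w(1) r(2) by simp
  then obtain g where g: "g 0 = w (Suc L)" "walk G g 0 n" unfolding has_long_walks_def by blast
  have "walk G v 0 (r - 1)" "walk G w (r - 1) (Suc L)"
    using walk_mono[OF v(1), of 0 "r - 1"] walk_mono[OF w(2), of "r - 1" "Suc L"]
      L_less_omega[of r] r
    by simp_all
  then have vw: "walk G (\<lambda>k. if k \<le> r - 1 then v k else w k) 0 (Suc L)"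
    using walk_append w(1) by metis
  have before: "\<not> Suc L \<le> r - 1" using r(2) by arith
  have U: "walk G (\<lambda>k. if k \<le> Suc L then (if k \<le> r - 1 then v k else w k) else g (k - Suc L))
      0 (Suc L + n)"
    using walk_append[OF vw walk_shift[OF g(2)]] g(1) before by simp
  have "T1.D y \<le> Suc L + n \<and> T2.D y \<le> Suc L + n" if "y \<in> T1.V" for y
    using T1.D_plus_rt_le[OF that] T2.D_plus_rt_le[of y] that V_eq rt_eq by auto
  then show ?thesis using nontrivial_at_Suc_L[OF U] before by simp
qed

lemma omegaG_less_omega:
  assumes r: "1 \<le> r" "r \<le> Suc L"
  shows "omegaG G (Suc L) r < ereal (real (omega t1 t2 r))"
proof -
  have less: "m < omega t1 t2 r" if m: "m \<in> omegaG_set G (Suc L) r" for m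
  proof (rule ccontr)
    assume "\<not> m < omega t1 t2 r"
    moreover obtain v w where "walk G v 0 (Suc L)" "nontrivial_scc G (v (Suc L))"
      "w (r - 1) = v (r - 1)" "walk G w (r - 1) m" "\<not> nontrivial_scc G (w (Suc L))"
      using m unfolding omegaG_set_def by blast
    ultimately show False using nontrivial_scc_after_walks[OF _ _ r] walk_mono by force
  qed
  have "omegaG G (Suc L) r \<le> ereal (real (omega t1 t2 r) - 1)"
    unfolding omegaG_def using less by (intro Sup_least) force
  also have "\<dots> < ereal (real (omega t1 t2 r))" by simp
  finally show ?thesis .
qed

end

theorem lemma6p24:
  fixes E :: "('v \<times> 'v) set" and t t' :: bterm and n :: nat
  assumes "t \<in> B n" and "t' \<in> B n" and "t \<noteq> t'"
    and "satisfies E t t'"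
  shows "(\<forall>(v :: nat \<Rightarrow> 'v) (w :: nat \<Rightarrow> 'v) r.
            walk E v 0 (Lpar t t' + 1) \<and> nontrivial_scc E (v (Lpar t t' + 1))
            \<and> 1 \<le> r \<and> r \<le> Lpar t t' + 1
            \<and> w (r - 1) = v (r - 1) \<and> walk E w (r - 1) (omega t t' r)
            \<longrightarrow> nontrivial_scc E (w (Lpar t t' + 1)))
       \<and> (\<forall>r. 1 \<le> r \<and> r \<le> Lpar t t' + 1
            \<longrightarrow> omegaG E (Lpar t t' + 1) r < ereal (real (omega t t' r)))"
proof -
  interpret satisfied_identity n t t' E
    using assms by unfold_locales
  show ?thesis
    using nontrivial_scc_after_walks omegaG_less_omega by auto
qed

end
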